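(* Let $k\ge1$ and let $F$ be a partially colored forest. If Alice can win the $k$-Modified Coloring Game on every trunk in $\mathcal{R}(F)$, then she can win the $k$-Modified Coloring Game on $\mathcal{R}(F)$.
   Context: A partial coloring of a graph assigns to some vertices colors from a fixed set $C$ of $k$ colors so that adjacent colored vertices receive different colors; a color is legal for an uncolored vertex $v$ if no neighbor of $v$ has that color. The $k$-Modified Coloring Game ($k$-MCG) on a partially colored graph: Bob and Alice alternate turns, Bob first, each turn coloring an uncolored vertex with a legal color from $C$, except that Bob may choose to pass on any of his turns. Bob wins if at some point an uncolored vertex has no legal color; Alice wins if every vertex becomes colored. For a partially colored forest $F$, a trunk of $F$ is a maximal connected subgraph $R$ of $F$ such that every colored vertex of $R$ is a leaf of $R$. $\mathcal{R}(F)$ denotes the partially colored forest that is the disjoint union of all trunks of $F$ (a colored vertex lying in several trunks appears as a separate colored copy in each of them). *)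

theory Defs
  imports Main
begin

text \<open>Graphs: a vertex set V and an edge relation E (symmetric, irreflexive, on V).
  Partial colourings: c :: 'a => nat option, colours are 0..<k; None = uncoloured.\<close>

definition is_graph :: "'a set \<Rightarrow> ('a \<Rightarrow> 'a \<Rightarrow> bool) \<Rightarrow> bool" where
  "is_graph V E \<longleftrightarrow> finite V \<and> (\<forall>u v. E u v \<longrightarrow> u \<in> V \<and> v \<in> V \<and> E v u \<and> u \<noteq> v)"

definition is_cycle :: "('a \<Rightarrow> 'a \<Rightarrow> bool) \<Rightarrow> 'a list \<Rightarrow> bool" where
  "is_cycle E xs \<longleftrightarrow> length xs \<ge> 3 \<and> distinct xs
     \<and> (\<forall>i. Suc i < length xs \<longrightarrow> E (xs ! i) (xs ! Suc i)) \<and> E (last xs) (hd xs)"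

definition is_forest :: "'a set \<Rightarrow> ('a \<Rightarrow> 'a \<Rightarrow> bool) \<Rightarrow> bool" where
  "is_forest V E \<longleftrightarrow> is_graph V E \<and> (\<nexists>xs. is_cycle E xs)"

definition partial_coloring :: "nat \<Rightarrow> 'a set \<Rightarrow> ('a \<Rightarrow> 'a \<Rightarrow> bool) \<Rightarrow> ('a \<Rightarrow> nat option) \<Rightarrow> bool" where
  "partial_coloring k V E c \<longleftrightarrow>
     (\<forall>v\<in>V. \<forall>col. c v = Some col \<longrightarrow> col < k) \<and>
     (\<forall>u v. E u v \<longrightarrow> c u \<noteq> None \<longrightarrow> c u \<noteq> c v)"

definition legal :: "nat \<Rightarrow> 'a set \<Rightarrow> ('a \<Rightarrow> 'a \<Rightarrow> bool) \<Rightarrow> ('a \<Rightarrow> nat option) \<Rightarrow> 'a \<Rightarrow> nat \<Rightarrow> bool" where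
  "legal k V E c v col \<longleftrightarrow> v \<in> V \<and> c v = None \<and> col < k \<and>
     (\<forall>u\<in>V. E u v \<longrightarrow> c u \<noteq> Some col)"

text \<open>Bob has won: some uncoloured vertex has no legal colour.\<close>
definition blocked :: "nat \<Rightarrow> 'a set \<Rightarrow> ('a \<Rightarrow> 'a \<Rightarrow> bool) \<Rightarrow> ('a \<Rightarrow> nat option) \<Rightarrow> bool" where
  "blocked k V E c \<longleftrightarrow> (\<exists>v\<in>V. c v = None \<and> (\<forall>col. \<not> legal k V E c v col))"

definition complete :: "'a set \<Rightarrow> ('a \<Rightarrow> nat option) \<Rightarrow> bool" where
  "complete V c \<longleftrightarrow> (\<forall>v\<in>V. c v \<noteq> None)"

text \<open>Winning positions for Alice in the k-Modified Coloring Game: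
  mcg_A: Alice is to move; mcg_B: Bob is to move (Bob may pass).
  Least fixpoint = Alice can force that every vertex becomes coloured
  without Bob ever winning.\<close>
inductive mcg_A and mcg_B for k :: nat and V :: "'a set" and E :: "'a \<Rightarrow> 'a \<Rightarrow> bool" where
  A_done: "complete V c \<Longrightarrow> mcg_A k V E c"
| A_move: "\<not> blocked k V E c \<Longrightarrow> legal k V E c v col \<Longrightarrow> mcg_B k V E (c(v := Some col))
            \<Longrightarrow> mcg_A k V E c"
| B_done: "complete V c \<Longrightarrow> mcg_B k V E c"
| B_move: "\<not> blocked k V E c \<Longrightarrow> mcg_A k V E c
            \<Longrightarrow> (\<And>v col. legal k V E c v col \<Longrightarrow> mcg_A k V E (c(v := Some col)))
            \<Longrightarrow> mcg_B k V E c"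

text \<open>Alice wins the k-MCG on the partially coloured graph (V,E,c) (Bob moves first).\<close>
definition alice_wins :: "nat \<Rightarrow> 'a set \<Rightarrow> ('a \<Rightarrow> 'a \<Rightarrow> bool) \<Rightarrow> ('a \<Rightarrow> nat option) \<Rightarrow> bool" where
  "alice_wins k V E c \<longleftrightarrow> mcg_B k V E c"

text \<open>Connected subgraph on vertex set S (in a forest, connected subgraphs are induced).\<close>
definition connected_on :: "('a \<Rightarrow> 'a \<Rightarrow> bool) \<Rightarrow> 'a set \<Rightarrow> bool" where
  "connected_on E S \<longleftrightarrow> S \<noteq> {} \<and>
     (\<forall>u\<in>S. \<forall>v\<in>S. (\<lambda>x y. x \<in> S \<and> y \<in> S \<and> E x y)\<^sup>*\<^sup>* u v)"

definition trunk_like :: "'a set \<Rightarrow> ('a \<Rightarrow> 'a \<Rightarrow> bool) \<Rightarrow> ('a \<Rightarrow> nat option) \<Rightarrow> 'a set \<Rightarrow> bool" where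
  "trunk_like V E c S \<longleftrightarrow> S \<subseteq> V \<and> connected_on E S \<and>
     (\<forall>v\<in>S. c v \<noteq> None \<longrightarrow> card {u\<in>S. E u v} = 1)"

definition trunk :: "'a set \<Rightarrow> ('a \<Rightarrow> 'a \<Rightarrow> bool) \<Rightarrow> ('a \<Rightarrow> nat option) \<Rightarrow> 'a set \<Rightarrow> bool" where
  "trunk V E c S \<longleftrightarrow> trunk_like V E c S \<and> (\<forall>T. S \<subset> T \<longrightarrow> \<not> trunk_like V E c T)"

text \<open>R(F): disjoint union of all trunks; vertex (S,v) is the copy of v in trunk S.\<close>
definition RV :: "'a set \<Rightarrow> ('a \<Rightarrow> 'a \<Rightarrow> bool) \<Rightarrow> ('a \<Rightarrow> nat option) \<Rightarrow> ('a set \<times> 'a) set" where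
  "RV V E c = {(S, v). trunk V E c S \<and> v \<in> S}"

definition RE :: "('a \<Rightarrow> 'a \<Rightarrow> bool) \<Rightarrow> ('a set \<times> 'a) \<Rightarrow> ('a set \<times> 'a) \<Rightarrow> bool" where
  "RE E x y \<longleftrightarrow> fst x = fst y \<and> snd x \<in> fst x \<and> snd y \<in> fst y \<and> E (snd x) (snd y)"

definition Rc :: "('a \<Rightarrow> nat option) \<Rightarrow> ('a set \<times> 'a) \<Rightarrow> nat option" where
  "Rc c x = c (snd x)"

end

theory Submission
  imports Defs
begin

text \<open>Alice plays on the disjoint union by answering in the component Bob just played in, with
  that component's winning strategy; when Bob passes, she may treat it as a pass in any
  unfinished component. Hence, whenever it is Alice's turn, every component is a winning
  Bob-to-move position except at most one, which is winning with either player to move.\<close>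

definition component_coloring :: "('b set \<times> 'b \<Rightarrow> nat option) \<Rightarrow> 'b set \<Rightarrow> 'b \<Rightarrow> nat option" where
  "component_coloring C S = (\<lambda>v. C (S, v))"

lemma component_coloring_upd:
  "component_coloring (C((S, v) := x)) T =
     (if T = S then (component_coloring C S)(v := x) else component_coloring C T)"
  by (auto simp: component_coloring_def fun_eq_iff)

lemma legal_Sigma_iff:
  "legal k (SIGMA S:I. S) (RE E) C (S, v) col \<longleftrightarrow>
     S \<in> I \<and> legal k S E (component_coloring C S) v col"
  unfolding legal_def RE_def component_coloring_def by auto

lemma blocked_Sigma_iff:
  "blocked k (SIGMA S:I. S) (RE E) C \<longleftrightarrow> (\<exists>S\<in>I. blocked k S E (component_coloring C S))"
  unfolding blocked_def by (force simp: legal_Sigma_iff component_coloring_def)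

lemma complete_Sigma_iff:
  "complete (SIGMA S:I. S) C \<longleftrightarrow> (\<forall>S\<in>I. complete S (component_coloring C S))"
  unfolding complete_def component_coloring_def by auto

lemma card_uncoloured_upd_less:
  assumes "finite W" "x \<in> W" "C x = None"
  shows "card {y\<in>W. (C(x := Some col)) y = None} < card {y\<in>W. C y = None}"
proof -
  have "{y\<in>W. (C(x := Some col)) y = None} = {y\<in>W. C y = None} - {x}" by auto
  moreover have "card ({y\<in>W. C y = None} - {x}) < card {y\<in>W. C y = None}"
    using assms by (intro card_Diff1_less) auto
  ultimately show ?thesis by simp
qed

lemma not_blocked_if_complete: "complete V c \<Longrightarrow> \<not> blocked k V E c"
  unfolding complete_def blocked_def by auto

lemma legal_not_complete: "legal k V E c v col \<Longrightarrow> \<not> complete V c"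
  unfolding legal_def complete_def by auto

lemma mcg_B_incomplete:
  assumes "mcg_B k V E c" "\<not> complete V c"
  shows "\<not> blocked k V E c" "mcg_A k V E c"
    "\<And>v col. legal k V E c v col \<Longrightarrow> mcg_A k V E (c(v := Some col))"
  using assms by (auto elim: mcg_B.cases)

lemma mcg_A_incomplete_move:
  assumes "mcg_A k V E c" "\<not> complete V c"
  obtains v col where "legal k V E c v col" "mcg_B k V E (c(v := Some col))"
  using assms by (auto elim: mcg_A.cases)

lemma mcg_A_not_blocked: "mcg_A k V E c \<Longrightarrow> \<not> blocked k V E c"
  by (cases "complete V c") (auto simp: not_blocked_if_complete elim: mcg_A.cases)

lemma mcg_B_not_blocked: "mcg_B k V E c \<Longrightarrow> \<not> blocked k V E c"
  by (cases "complete V c") (auto simp: not_blocked_if_complete mcg_B_incomplete)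

lemma mcg_B_Sigma_if_mcg_A_Sigma:
  assumes components: "\<forall>S\<in>I. mcg_B k S E (component_coloring C S)"
    and alice: "\<And>D S0. card {x\<in>SIGMA S:I. S. D x = None} \<le> card {x\<in>SIGMA S:I. S. C x = None}
        \<Longrightarrow> \<forall>S\<in>I. S \<noteq> S0 \<longrightarrow> mcg_B k S E (component_coloring D S)
        \<Longrightarrow> S0 \<in> I \<longrightarrow> mcg_A k S0 E (component_coloring D S0) \<or> mcg_B k S0 E (component_coloring D S0)
        \<Longrightarrow> mcg_A k (SIGMA S:I. S) (RE E) D"
    and fin: "finite (SIGMA S:I. S)"
  shows "mcg_B k (SIGMA S:I. S) (RE E) C"
proof (cases "complete (SIGMA S:I. S) C")
  case True
  then show ?thesis by (rule mcg_A_mcg_B.B_done)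
next
  case False
  have "\<not> blocked k (SIGMA S:I. S) (RE E) C"
    using components mcg_B_not_blocked by (simp add: blocked_Sigma_iff) blast
  moreover have "mcg_A k (SIGMA S:I. S) (RE E) C"
    using components by (intro alice[of C "{}"]) simp_all
  moreover have "mcg_A k (SIGMA S:I. S) (RE E) (C(x := Some col))"
    if bob: "legal k (SIGMA S:I. S) (RE E) C x col" for x col
  proof -
    obtain S v where x: "x = (S, v)" by (cases x)
    with bob have S: "S \<in> I" and lg: "legal k S E (component_coloring C S) v col"
      by (simp_all add: legal_Sigma_iff)
    have "mcg_B k S E (component_coloring C S)"
      using components S ..
    then have "mcg_A k S E ((component_coloring C S)(v := Some col))"
      using lg by (rule mcg_B_incomplete(3)[OF _ legal_not_complete[OF lg]])
    then have S_won: "mcg_A k S E (component_coloring (C(x := Some col)) S)"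
      by (simp add: x component_coloring_upd)
    have "x \<in> (SIGMA S:I. S)" "C x = None"
      using bob by (simp_all add: legal_def)
    then have "card {y\<in>SIGMA S:I. S. (C(x := Some col)) y = None}
        \<le> card {y\<in>SIGMA S:I. S. C y = None}"
      by (intro less_imp_le card_uncoloured_upd_less[OF fin])
    moreover have "\<forall>T\<in>I. T \<noteq> S \<longrightarrow> mcg_B k T E (component_coloring (C(x := Some col)) T)"
      using components by (simp add: x component_coloring_upd)
    ultimately show ?thesis
      using S_won by (intro alice[of _ S]) simp_all
  qed
  ultimately show ?thesis by (rule mcg_A_mcg_B.B_move)
qed

lemma mcg_A_Sigma:
  assumes fin: "finite (SIGMA S:I. S)"
    and "\<forall>S\<in>I. S \<noteq> S0 \<longrightarrow> mcg_B k S E (component_coloring D S)"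
    and "S0 \<in> I \<longrightarrow> mcg_A k S0 E (component_coloring D S0) \<or> mcg_B k S0 E (component_coloring D S0)"
  shows "mcg_A k (SIGMA S:I. S) (RE E) D"
  using assms(2,3)
proof (induction "card {x\<in>SIGMA S:I. S. D x = None}" arbitrary: D S0 rule: less_induct)
  case less
  show ?case
  proof (cases "complete (SIGMA S:I. S) D")
    case True
    then show ?thesis by (rule mcg_A_mcg_B.A_done)
  next
    case incomplete: False
    have "\<not> blocked k (SIGMA S:I. S) (RE E) D"
      unfolding blocked_Sigma_iff
    proof
      assume "\<exists>S\<in>I. blocked k S E (component_coloring D S)"
      then obtain S where "S \<in> I" "blocked k S E (component_coloring D S)" ..
      then show False
      proof (cases "S = S0")
        case True
        with less.prems(2) \<open>S \<in> I\<close> \<open>blocked k S E (component_coloring D S)\<close> show False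
          using mcg_A_not_blocked mcg_B_not_blocked by blast
      next
        case False
        with less.prems(1) \<open>S \<in> I\<close> \<open>blocked k S E (component_coloring D S)\<close> show False
          using mcg_B_not_blocked by blast
      qed
    qed
    moreover
    obtain T v col where T: "T \<in> I" and lg: "legal k T E (component_coloring D T) v col"
      and after: "\<forall>S\<in>I. mcg_B k S E (component_coloring (D((T, v) := Some col)) S)"
    proof (cases "S0 \<in> I \<and> \<not> complete S0 (component_coloring D S0)
                  \<and> mcg_A k S0 E (component_coloring D S0)")
      case True
      then have "mcg_A k S0 E (component_coloring D S0)" "\<not> complete S0 (component_coloring D S0)"
        by simp_all
      then obtain v col where "legal k S0 E (component_coloring D S0) v col"
        and "mcg_B k S0 E ((component_coloring D S0)(v := Some col))"
        by (rule mcg_A_incomplete_move)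
      with True less.prems(1) show ?thesis
        by (intro that[of S0 v col]) (simp_all add: component_coloring_upd)
    next
      case False
      have all_B: "\<forall>S\<in>I. mcg_B k S E (component_coloring D S)"
      proof
        fix S assume "S \<in> I"
        show "mcg_B k S E (component_coloring D S)"
        proof (cases "S = S0")
          case True
          with False less.prems(2) \<open>S \<in> I\<close> show ?thesis
            by (blast intro: mcg_A_mcg_B.B_done)
        next
          case False
          with less.prems(1) \<open>S \<in> I\<close> show ?thesis by blast
        qed
      qed
      from incomplete obtain T where T: "T \<in> I" "\<not> complete T (component_coloring D T)"
        unfolding complete_Sigma_iff by blast
      with all_B have "mcg_A k T E (component_coloring D T)"
        using mcg_B_incomplete(2) by blast
      then obtain v col where "legal k T E (component_coloring D T) v col"
        and "mcg_B k T E ((component_coloring D T)(v := Some col))"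
        using T(2) by (rule mcg_A_incomplete_move)
      with T all_B show ?thesis
        by (intro that[of T v col]) (simp_all add: component_coloring_upd)
    qed
    have "legal k (SIGMA S:I. S) (RE E) D (T, v) col"
      using T lg by (simp add: legal_Sigma_iff)
    moreover have "mcg_B k (SIGMA S:I. S) (RE E) (D((T, v) := Some col))"
    proof (rule mcg_B_Sigma_if_mcg_A_Sigma[OF after _ fin])
      have "card {x\<in>SIGMA S:I. S. (D((T, v) := Some col)) x = None}
          < card {x\<in>SIGMA S:I. S. D x = None}"
        using T lg by (intro card_uncoloured_upd_less[OF fin])
          (simp_all add: legal_def component_coloring_def)
      note fewer = this
      show "mcg_A k (SIGMA S:I. S) (RE E) D'"
        if "card {x\<in>SIGMA S:I. S. D' x = None}
              \<le> card {x\<in>SIGMA S:I. S. (D((T, v) := Some col)) x = None}"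
          and "\<forall>S\<in>I. S \<noteq> S0' \<longrightarrow> mcg_B k S E (component_coloring D' S)"
          and "S0' \<in> I \<longrightarrow> mcg_A k S0' E (component_coloring D' S0')
                            \<or> mcg_B k S0' E (component_coloring D' S0')"
        for D' S0'
        using less.hyps[OF le_less_trans[OF that(1) fewer] that(2,3)] .
    qed
    ultimately show ?thesis by (rule mcg_A_mcg_B.A_move)
  qed
qed

lemma mcg_B_Sigma:
  assumes "finite (SIGMA S:I. S)" "\<forall>S\<in>I. mcg_B k S E (component_coloring C S)"
  shows "mcg_B k (SIGMA S:I. S) (RE E) C"
proof (rule mcg_B_Sigma_if_mcg_A_Sigma[OF assms(2) _ assms(1)])
  show "mcg_A k (SIGMA S:I. S) (RE E) D"
    if "\<forall>S\<in>I. S \<noteq> S0 \<longrightarrow> mcg_B k S E (component_coloring D S)"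
      and "S0 \<in> I \<longrightarrow> mcg_A k S0 E (component_coloring D S0) \<or> mcg_B k S0 E (component_coloring D S0)"
    for D S0
    using assms(1) that by (rule mcg_A_Sigma)
qed

theorem lemma2p2:
  fixes k :: nat and V :: "'a set" and E :: "'a \<Rightarrow> 'a \<Rightarrow> bool" and c :: "'a \<Rightarrow> nat option"
  assumes "k \<ge> 1"
    and "is_forest V E"
    and "partial_coloring k V E c"
    and "\<And>S. trunk V E c S \<Longrightarrow> alice_wins k S E c"
  shows "alice_wins k (RV V E c) (RE E) (Rc c)"
proof -
  have RV_eq: "RV V E c = (SIGMA S:Collect (trunk V E c). S)"
    unfolding RV_def by fast
  have fin_V: "finite V"
    using assms(2) unfolding is_forest_def is_graph_def by simp
  have trunk_sub: "Collect (trunk V E c) \<subseteq> Pow V"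
    unfolding trunk_def trunk_like_def by blast
  have "finite (SIGMA S:Collect (trunk V E c). S)"
  proof (rule finite_SigmaI)
    show "finite (Collect (trunk V E c))"
      using trunk_sub fin_V by (simp add: finite_subset)
    show "finite S" if "S \<in> Collect (trunk V E c)" for S
      using that trunk_sub fin_V by (blast intro: finite_subset)
  qed
  moreover have "component_coloring (Rc c) S = c" for S
    by (simp add: component_coloring_def Rc_def fun_eq_iff)
  ultimately have "mcg_B k (SIGMA S:Collect (trunk V E c). S) (RE E) (Rc c)"
    using assms(4) unfolding alice_wins_def by (intro mcg_B_Sigma) auto
  then show ?thesis
    unfolding RV_eq alice_wins_def .
qed

end
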